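(* Let $q$ be a prime number and $\mathbb{A}=\mathbb{Q}\cap[-1,0[$. Then $\mathbb{A}\text{-}\mathcal{KS}(q^{2})=\emptyset$.
   Context: Every nonzero rational $\alpha$ is written $\alpha=\alpha_1/\alpha_2$ with $\alpha_1\in\mathbb{Z}$, $\alpha_2$ a positive integer and $\gcd(\alpha_1,\alpha_2)=1$. For an integer $N\ge 2$ and a nonzero rational $\alpha=\alpha_1/\alpha_2$, $N$ is called an $\alpha$-Korselt number if $N\neq\alpha$ and $\alpha_2p-\alpha_1$ divides $\alpha_2N-\alpha_1$ (in $\mathbb{Z}$) for every prime divisor $p$ of $N$. For a subset $\mathbb{A}\subseteq\mathbb{Q}$, $\mathbb{A}\text{-}\mathcal{KS}(N)$ denotes the set of all $\beta\in\mathbb{A}\setminus\{0,N\}$ such that $N$ is a $\beta$-Korselt number. $[-1,0[$ denotes the half-open interval $\{x:-1\le x<0\}$. *)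

theory Defs
  imports Complex_Main "HOL-Computational_Algebra.Primes"
begin

text \<open>alpha = a1/a2 in lowest terms with a2 > 0 is given by quotient_of.\<close>
definition korselt :: "nat \<Rightarrow> rat \<Rightarrow> bool" where
  "korselt N \<alpha> \<longleftrightarrow> N \<ge> 2 \<and> \<alpha> \<noteq> 0 \<and> \<alpha> \<noteq> of_nat N \<and>
     (let (a1, a2) = quotient_of \<alpha> in
       \<forall>p::nat. prime p \<and> p dvd N \<longrightarrow> (a2 * int p - a1) dvd (a2 * int N - a1))"

definition KS :: "rat set \<Rightarrow> nat \<Rightarrow> rat set" where
  "KS A N = {\<beta> \<in> A - {0, of_nat N}. korselt N \<beta>}"

end

theory Submission
  imports Defs
begin

text \<open>Write \<open>\<beta> = a\<^sub>1/a\<^sub>2\<close> and take the prime divisor \<open>q\<close> of \<open>q\<^sup>2\<close>. Since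
  \<open>a\<^sub>2q\<^sup>2 - a\<^sub>1 = q(a\<^sub>2q - a\<^sub>1) + a\<^sub>1(q - 1)\<close>, the Korselt condition forces
  \<open>a\<^sub>2q - a\<^sub>1\<close> to divide \<open>-a\<^sub>1(q - 1)\<close>. For \<open>-1 \<le> \<beta> < 0\<close> the latter is positive but
  \<open>-a\<^sub>1(q - 1) < -a\<^sub>1q \<le> a\<^sub>2q < a\<^sub>2q - a\<^sub>1\<close>, which is impossible.\<close>

lemma korselt_dvd:
  assumes "korselt N \<beta>" "quotient_of \<beta> = (a1, a2)" "prime p" "p dvd N"
  shows "(a2 * int p - a1) dvd (a2 * int N - a1)"
  using assms unfolding korselt_def by auto

lemma quotient_of_ge_minus_one_neg:
  assumes "quotient_of \<beta> = (a1, a2)" "-1 \<le> \<beta>" "\<beta> < 0"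
  shows "a1 < 0" "-a1 \<le> a2"
proof -
  have a2: "a2 > 0" using quotient_of_denom_pos[OF assms(1)] .
  have \<beta>: "\<beta> = of_int a1 / of_int a2" using quotient_of_div[OF assms(1)] .
  show "a1 < 0"
    using assms(3) a2 by (simp add: \<beta> divide_less_0_iff)
  have "- of_int a2 \<le> (of_int a1 :: rat)"
    using assms(2) a2 by (simp add: \<beta> le_divide_eq)
  then show "-a1 \<le> a2" by linarith
qed

lemma not_dvd_shifted_square:
  fixes a1 a2 q :: int
  assumes "a1 < 0" "-a1 \<le> a2" "q \<ge> 2"
  shows "\<not> (a2 * q - a1) dvd (a2 * q^2 - a1)"
proof
  assume dvd: "(a2 * q - a1) dvd (a2 * q^2 - a1)"
  have "a2 * q^2 - a1 = q * (a2 * q - a1) + a1 * (q - 1)"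
    by (simp add: algebra_simps power2_eq_square)
  with dvd have "(a2 * q - a1) dvd (-a1) * (q - 1)"
    by (metis dvd_add_right_iff dvd_triv_right dvd_minus_iff mult_minus_left)
  moreover have "(-a1) * (q - 1) > 0"
    using assms by (intro mult_pos_pos) auto
  ultimately have "a2 * q - a1 \<le> (-a1) * (q - 1)"
    by (simp add: zdvd_imp_le)
  also have "\<dots> < (-a1) * q"
    using assms by simp
  also have "\<dots> \<le> a2 * q"
    using assms by (intro mult_right_mono) auto
  finally show False
    using assms by simp
qed

theorem corollary5p8:
  fixes q :: nat
  assumes "prime q"
  shows "KS {\<beta>::rat. -1 \<le> \<beta> \<and> \<beta> < 0} (q^2) = {}"
proof (rule ccontr)
  assume "KS {\<beta>::rat. -1 \<le> \<beta> \<and> \<beta> < 0} (q^2) \<noteq> {}"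
  then obtain \<beta> where \<beta>: "-1 \<le> \<beta>" "\<beta> < 0" "korselt (q^2) \<beta>"
    unfolding KS_def by auto
  obtain a1 a2 where quot: "quotient_of \<beta> = (a1, a2)"
    by (cases "quotient_of \<beta>")
  have "(a2 * int q - a1) dvd (a2 * (int q)^2 - a1)"
    using korselt_dvd[OF \<beta>(3) quot assms] by simp
  moreover have "int q \<ge> 2"
    using prime_ge_2_nat[OF assms] by simp
  ultimately show False
    using not_dvd_shifted_square quotient_of_ge_minus_one_neg[OF quot \<beta>(1,2)] by blast
qed

end
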